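(* Let ${\bf r}=(r_0,r_1,\dots)$ be a finitely supported sequence of nonnegative integers with $n=\sum_{d\ge1}r_d$, and let $k\ge0$ be an integer. Then $$|\mathcal{CF}_{{\bf r},k}|=\sum_{F\in\mathscr F({\bf r})}n!\prod_{v\in I(F)}\Big((d_v+k)-\frac{k}{h_v}\Big).$$
   Context: A plane tree is an unlabelled rooted tree in which the children of every vertex are linearly ordered; a plane forest is a finite linearly ordered sequence of plane trees. For vertices $u,v$ in a tree, $v$ is a descendant of $u$ if $u$ lies on the path from the root to $v$ (so $u$ is a descendant of itself). The degree $d_v$ is the number of children of $v$; $v$ is internal if $d_v\ge1$. $I(F)$ is the set of internal vertices of $F$. The hook length $h_v$ of an internal vertex $v$ is the number of internal vertices among the descendants of $v$ (including $v$). A plane forest has type ${\bf r}$ if it has exactly $r_i$ vertices of degree $i$ for all $i\ge0$; $\mathscr F({\bf r})$ is the set of such forests, and $n=\sum_{d\ge1}r_d$ is the number of internal vertices. A labelled forest is a plane forest $F$ together with a bijection (labelling) $I(F)\to[n]$. An internal vertex $v$ of a labelled forest is proper if no internal descendant of $v$ has a smaller label than $v$, and improper otherwise. Fix colors $c_1,c_2,\dots$ and distinct special colors $c_1',c_2',\dots$. A proper $k$-coloring of a labelled forest assigns to each internal vertex $v$ a color, taken from $\{c_1,\dots,c_{d_v}\}$ if $v$ is proper and from $\{c_1,\dots,c_{d_v}\}\cup\{c_1',\dots,c_k'\}$ if $v$ is improper. A $k$-colored labelled forest is a labelled forest together with a proper $k$-coloring; $\mathcal{CF}_{{\bf r},k}$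 is the set of $k$-colored labelled forests whose underlying plane forest has type ${\bf r}$. *)

theory Defs
  imports "HOL-Library.FuncSet" Complex_Main
begin

datatype ptree = Node "ptree list"

fun kids :: "ptree \<Rightarrow> ptree list" where
  "kids (Node cs) = cs"

fun tget :: "ptree \<Rightarrow> nat list \<Rightarrow> ptree option" where
  "tget t [] = Some t"
| "tget (Node cs) (i # p) = (if i < length cs then tget (cs ! i) p else None)"

text \<open>Vertices of a forest F are the nonempty paths in the tree Node F (the first index
  selects the tree of the forest).\<close>
definition verts :: "ptree list \<Rightarrow> nat list set" where
  "verts F = {p. p \<noteq> [] \<and> tget (Node F) p \<noteq> None}"

definition deg :: "ptree list \<Rightarrow> nat list \<Rightarrow> nat" where
  "deg F v = length (kids (the (tget (Node F) v)))"

definition internal :: "ptree list \<Rightarrow> nat list set" where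
  "internal F = {v \<in> verts F. 1 \<le> deg F v}"

definition desc :: "nat list \<Rightarrow> nat list \<Rightarrow> bool" where
  "desc w v \<longleftrightarrow> (\<exists>x. w = v @ x)"

definition hook :: "ptree list \<Rightarrow> nat list \<Rightarrow> nat" where
  "hook F v = card {w \<in> internal F. desc w v}"

definition has_type :: "ptree list \<Rightarrow> (nat \<Rightarrow> nat) \<Rightarrow> bool" where
  "has_type F r \<longleftrightarrow> (\<forall>i. card {v \<in> verts F. deg F v = i} = r i)"

definition forests :: "(nat \<Rightarrow> nat) \<Rightarrow> ptree list set" where
  "forests r = {F. has_type F r}"

definition num_internal :: "(nat \<Rightarrow> nat) \<Rightarrow> nat" where
  "num_internal r = (\<Sum>d \<in> {d. 1 \<le> d \<and> r d \<noteq> 0}. r d)"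

definition proper :: "ptree list \<Rightarrow> (nat list \<Rightarrow> nat) \<Rightarrow> nat list \<Rightarrow> bool" where
  "proper F lab v \<longleftrightarrow> (\<forall>w \<in> internal F. desc w v \<longrightarrow> lab v \<le> lab w)"

text \<open>Colours: C i is c_i, C' j is the special colour c'_j.\<close>
datatype color = C nat | C' nat

definition allowed :: "nat \<Rightarrow> ptree list \<Rightarrow> (nat list \<Rightarrow> nat) \<Rightarrow> nat list \<Rightarrow> color set" where
  "allowed k F lab v =
     {C i | i. 1 \<le> i \<and> i \<le> deg F v} \<union>
     (if proper F lab v then {} else {C' j | j. 1 \<le> j \<and> j \<le> k})"

definition CF :: "(nat \<Rightarrow> nat) \<Rightarrow> nat \<Rightarrow> (ptree list \<times> (nat list \<Rightarrow> nat) \<times> (nat list \<Rightarrow> color)) set" where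
  "CF r k = {(F, lab, col). F \<in> forests r \<and>
       lab \<in> extensional (internal F) \<and> bij_betw lab (internal F) {1..num_internal r} \<and>
       col \<in> (\<Pi>\<^sub>E v \<in> internal F. allowed k F lab v)}"

end

theory Submission
  imports Defs "HOL-Combinatorics.Permutations"
begin

(* A labelled forest carries prod_v (d_v + k - k [v proper]) colourings. Expanding this
   product over the set X of vertices that take the term -k [v proper], one needs the number
   of labellings making every vertex of X proper; it is n! / prod_{v in X} h_v. Indeed, if v
   is a vertex of X with no other vertex of X below it, composing with the transposition of v
   and w, for w ranging over the h_v descendants of v, maps the labellings proper on X
   bijectively onto those proper on X - {v}: it moves the smallest label of the subtree of v
   to v, and every other vertex of X has either both or neither of v and w among its
   descendants. *)

definition labellings :: "'a set \<Rightarrow> ('a \<Rightarrow> nat) set" where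
  "labellings I = {lab \<in> extensional I. bij_betw lab I {1..card I}}"

lemma bij_betw_permutations_labellings:
  assumes lab0: "bij_betw lab0 I {1..card I}"
  shows "bij_betw (\<lambda>p. restrict (lab0 \<circ> p) I) {p. p permutes I} (labellings I)"
proof (rule bij_betw_imageI)
  show "inj_on (\<lambda>p. restrict (lab0 \<circ> p) I) {p. p permutes I}"
  proof (rule inj_onI, rule ext)
    fix p q x
    assume p: "p \<in> {p. p permutes I}" and q: "q \<in> {p. p permutes I}"
      and eq: "restrict (lab0 \<circ> p) I = restrict (lab0 \<circ> q) I"
    show "p x = q x"
    proof (cases "x \<in> I")
      case True
      then have "lab0 (p x) = lab0 (q x)" "p x \<in> I" "q x \<in> I"
        using fun_cong[OF eq, of x] p q by (auto simp: permutes_in_image)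
      then show ?thesis using lab0 by (auto simp: bij_betw_def inj_on_def)
    qed (use p q in \<open>simp add: permutes_not_in\<close>)
  qed
next
  show "(\<lambda>p. restrict (lab0 \<circ> p) I) ` {p. p permutes I} = labellings I"
  proof (intro equalityI subsetI)
    fix lab assume "lab \<in> (\<lambda>p. restrict (lab0 \<circ> p) I) ` {p. p permutes I}"
    then obtain p where p: "p permutes I" and lab: "lab = restrict (lab0 \<circ> p) I" by blast
    have "bij_betw (lab0 \<circ> p) I {1..card I}"
      using permutes_imp_bij[OF p] lab0 by (rule bij_betw_trans)
    then have "bij_betw lab I {1..card I}"
      unfolding lab by (rule bij_betw_cong[THEN iffD1, rotated]) simp
    then show "lab \<in> labellings I" by (simp add: lab labellings_def)
  next
    fix lab assume lab: "lab \<in> labellings I"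
    define p where "p x = (if x \<in> I then inv_into I lab0 (lab x) else x)" for x
    have "bij_betw (inv_into I lab0 \<circ> lab) I I"
      using lab lab0 by (auto simp: labellings_def intro: bij_betw_trans bij_betw_inv_into)
    then have "bij_betw p I I" by (rule bij_betw_cong[THEN iffD1, rotated]) (simp add: p_def)
    then have "p permutes I" by (rule bij_imp_permutes) (simp add: p_def)
    moreover have "restrict (lab0 \<circ> p) I x = lab x" for x
    proof (cases "x \<in> I")
      case True
      then have "lab x \<in> lab0 ` I" using lab lab0 by (auto simp: labellings_def bij_betw_def)
      then show ?thesis using True by (simp add: p_def f_inv_into_f)
    qed (use lab in \<open>auto simp: labellings_def extensional_def\<close>)
    ultimately show "lab \<in> (\<lambda>p. restrict (lab0 \<circ> p) I) ` {p. p permutes I}"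
      by (intro image_eqI[of _ _ p]) auto
  qed
qed

lemma card_labellings:
  assumes "finite I"
  shows "card (labellings I) = fact (card I)"
proof -
  obtain lab0 where "bij_betw lab0 I {1..card I}"
    using finite_same_card_bij[OF assms, of "{1..card I}"] by auto
  then have "card (labellings I) = card {p. p permutes I}"
    by (rule bij_betw_same_card[OF bij_betw_permutations_labellings, symmetric])
  then show ?thesis using assms by (simp add: card_permutations)
qed

lemma finite_labellings: "finite I \<Longrightarrow> finite (labellings I)"
  by (rule card_ge_0_finite) (simp add: card_labellings)

lemma labellings_comp_transpose:
  assumes "lab \<in> labellings I" "v \<in> I" "w \<in> I"
  shows "lab \<circ> transpose v w \<in> labellings I"
proof -
  have "bij_betw (lab \<circ> transpose v w) I {1..card I}"
    using assms bij_betw_trans[of "transpose v w" I I lab] by (simp add: labellings_def)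
  moreover have "lab \<circ> transpose v w \<in> extensional I"
    using assms by (auto simp: labellings_def extensional_def transpose_def)
  ultimately show ?thesis by (simp add: labellings_def)
qed

lemma prod_of_bool:
  "finite A \<Longrightarrow> (\<Prod>x\<in>A. of_bool (P x)) = (of_bool (\<forall>x\<in>A. P x) :: 'b::comm_semiring_1)"
  by (induction A rule: finite_induct) auto

(* R w v reads "w is a descendant of v". For the descendant order on the internal vertices
   of a forest, card (subtree v) is the hook length of v and min_in_subtree lab v says that
   v is proper. *)

locale forest_order =
  fixes I :: "'a set" and R :: "'a \<Rightarrow> 'a \<Rightarrow> bool"
  assumes finite_I: "finite I"
    and R_refl: "v \<in> I \<Longrightarrow> R v v"
    and R_trans: "u \<in> I \<Longrightarrow> v \<in> I \<Longrightarrow> w \<in> I \<Longrightarrow> R u v \<Longrightarrow> R v w \<Longrightarrow> R u w"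
    and R_antisym: "v \<in> I \<Longrightarrow> w \<in> I \<Longrightarrow> R v w \<Longrightarrow> R w v \<Longrightarrow> v = w"
    and R_upper_chain: "x \<in> I \<Longrightarrow> v \<in> I \<Longrightarrow> w \<in> I \<Longrightarrow> R x v \<Longrightarrow> R x w \<Longrightarrow> R v w \<or> R w v"
begin

definition subtree :: "'a \<Rightarrow> 'a set" where
  "subtree v = {w \<in> I. R w v}"

definition min_in_subtree :: "('a \<Rightarrow> nat) \<Rightarrow> 'a \<Rightarrow> bool" where
  "min_in_subtree lab v \<longleftrightarrow> (\<forall>w \<in> subtree v. lab v \<le> lab w)"

definition min_labellings :: "'a set \<Rightarrow> ('a \<Rightarrow> nat) set" where
  "min_labellings S = {lab \<in> labellings I. \<forall>v \<in> S. min_in_subtree lab v}"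

lemma finite_subtree: "finite (subtree v)"
  using finite_I by (simp add: subtree_def)

lemma self_in_subtree: "v \<in> I \<Longrightarrow> v \<in> subtree v"
  by (simp add: subtree_def R_refl)

lemma card_subtree_pos: "v \<in> I \<Longrightarrow> card (subtree v) > 0"
  using finite_subtree self_in_subtree by (auto simp: card_gt_0_iff)

lemma min_in_subtree_comp_transpose_other:
  assumes s: "s \<in> I" "\<not> R s v" and v: "v \<in> I" and w: "w \<in> subtree v"
    and min: "min_in_subtree lab s"
  shows "min_in_subtree (lab \<circ> transpose v w) s"
proof -
  have wI: "w \<in> I" "R w v" using w by (auto simp: subtree_def)
  have fixed: "transpose v w s = s"
    using s wI R_refl[OF s(1)] by (auto simp: transpose_def)
  have "v \<in> subtree s \<longleftrightarrow> w \<in> subtree s"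
    using R_trans[of w v s] R_upper_chain[of w v s] s v wI by (auto simp: subtree_def)
  then have "transpose v w ` subtree s = subtree s" by (rule transpose_image_eq)
  then have "u \<in> subtree s \<Longrightarrow> transpose v w u \<in> subtree s" for u by blast
  then show ?thesis using min fixed by (simp add: min_in_subtree_def)
qed

lemma min_in_subtree_comp_transpose_self:
  assumes v: "v \<in> I" and w: "w \<in> subtree v"
  shows "min_in_subtree (lab \<circ> transpose v w) v \<longleftrightarrow> (\<forall>u \<in> subtree v. lab w \<le> lab u)"
proof -
  have "transpose v w ` subtree v = subtree v"
    using self_in_subtree[OF v] w by (intro transpose_image_eq) simp
  then have "(\<forall>u \<in> subtree v. lab w \<le> lab (transpose v w u)) \<longleftrightarrow> (\<forall>u \<in> subtree v. lab w \<le> lab u)"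
    by (metis image_iff)
  then show ?thesis by (simp add: min_in_subtree_def)
qed

lemma min_labellings_remove_minimal:
  assumes S: "S \<subseteq> I" "v \<in> S" and minimal: "\<forall>s\<in>S. R s v \<longrightarrow> s = v"
  shows "min_labellings (S - {v}) = (\<Union>w\<in>subtree v. (\<lambda>lab. lab \<circ> transpose v w) ` min_labellings S)"
proof (intro equalityI subsetI)
  fix lab' assume lab': "lab' \<in> min_labellings (S - {v})"
  have v: "v \<in> I" using S by blast
  have "Min (lab' ` subtree v) \<in> lab' ` subtree v"
    using finite_subtree self_in_subtree[OF v] by (intro Min_in) auto
  then obtain w where w: "w \<in> subtree v" and "lab' w = Min (lab' ` subtree v)" by auto
  then have w_min: "\<forall>u \<in> subtree v. lab' w \<le> lab' u" using finite_subtree by simp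
  define lab where "lab = lab' \<circ> transpose v w"
  have "lab \<in> labellings I"
    using lab' w v
    by (auto simp: lab_def min_labellings_def subtree_def intro: labellings_comp_transpose)
  moreover have "min_in_subtree lab v"
    using min_in_subtree_comp_transpose_self[OF v w] w_min by (simp add: lab_def)
  moreover have "min_in_subtree lab s" if "s \<in> S - {v}" for s
    using that S minimal v w lab' unfolding lab_def
    by (intro min_in_subtree_comp_transpose_other) (auto simp: min_labellings_def)
  ultimately have "lab \<in> min_labellings S" by (auto simp: min_labellings_def)
  moreover have "lab' = lab \<circ> transpose v w" by (simp add: lab_def comp_assoc)
  ultimately show "lab' \<in> (\<Union>w\<in>subtree v. (\<lambda>lab. lab \<circ> transpose v w) ` min_labellings S)"
    using w by blast
next
  fix lab' assume "lab' \<in> (\<Union>w\<in>subtree v. (\<lambda>lab. lab \<circ> transpose v w) ` min_labellings S)"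
  then obtain w lab where w: "w \<in> subtree v" and lab: "lab \<in> min_labellings S"
    and lab': "lab' = lab \<circ> transpose v w" by blast
  have v: "v \<in> I" using S by blast
  have "lab' \<in> labellings I"
    using lab w v
    by (auto simp: lab' min_labellings_def subtree_def intro: labellings_comp_transpose)
  moreover have "min_in_subtree lab' s" if "s \<in> S - {v}" for s
    using that S minimal v w lab unfolding lab'
    by (intro min_in_subtree_comp_transpose_other) (auto simp: min_labellings_def)
  ultimately show "lab' \<in> min_labellings (S - {v})" by (simp add: min_labellings_def)
qed

lemma min_labellings_transpose_disjoint:
  assumes v: "v \<in> I" "v \<in> S" and w: "w1 \<in> subtree v" "w2 \<in> subtree v" "w1 \<noteq> w2"
  shows "(\<lambda>lab. lab \<circ> transpose v w1) ` min_labellings S \<inter>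
         (\<lambda>lab. lab \<circ> transpose v w2) ` min_labellings S = {}"
proof (rule ccontr)
  assume "\<not> ?thesis"
  then obtain lab1 lab2 where lab: "lab1 \<in> min_labellings S" "lab2 \<in> min_labellings S"
    and eq: "lab1 \<circ> transpose v w1 = lab2 \<circ> transpose v w2" by blast
  define f where "f = lab1 \<circ> transpose v w1"
  have "f \<circ> transpose v w1 = lab1" by (simp add: f_def comp_assoc)
  moreover have "f \<circ> transpose v w2 = lab2" by (simp add: f_def eq comp_assoc)
  ultimately have "min_in_subtree (f \<circ> transpose v w1) v" "min_in_subtree (f \<circ> transpose v w2) v"
    using lab v by (simp_all add: min_labellings_def)
  then have "f w1 \<le> f w2" "f w2 \<le> f w1"
    using min_in_subtree_comp_transpose_self[OF v(1)] w by auto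
  moreover have "f \<in> labellings I"
    using lab v w unfolding f_def
    by (intro labellings_comp_transpose) (auto simp: min_labellings_def subtree_def)
  ultimately show False
    using w by (auto simp: labellings_def subtree_def bij_betw_def inj_on_def)
qed

lemma card_min_labellings_remove_minimal:
  assumes S: "S \<subseteq> I" "v \<in> S" and minimal: "\<forall>s\<in>S. R s v \<longrightarrow> s = v"
  shows "card (min_labellings (S - {v})) = card (subtree v) * card (min_labellings S)"
proof -
  have v: "v \<in> I" using S by blast
  have finite_min_labellings: "finite (min_labellings S)"
    using finite_labellings[OF finite_I] by (rule rev_finite_subset) (auto simp: min_labellings_def)
  have "inj_on (\<lambda>lab. lab \<circ> transpose v w) (min_labellings S)" for w
  proof (rule inj_onI)
    fix lab1 lab2 assume "lab1 \<circ> transpose v w = lab2 \<circ> transpose v w"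
    then have "lab1 \<circ> transpose v w \<circ> transpose v w = lab2 \<circ> transpose v w \<circ> transpose v w" by simp
    then show "lab1 = lab2" by (simp add: comp_assoc)
  qed
  then have "card ((\<lambda>lab. lab \<circ> transpose v w) ` min_labellings S) = card (min_labellings S)" for w
    by (rule card_image)
  moreover have "card (min_labellings (S - {v}))
      = (\<Sum>w\<in>subtree v. card ((\<lambda>lab. lab \<circ> transpose v w) ` min_labellings S))"
    unfolding min_labellings_remove_minimal[OF S minimal]
    using finite_subtree finite_min_labellings min_labellings_transpose_disjoint[OF v S(2)]
    by (intro card_UN_disjoint) auto
  ultimately show ?thesis by simp
qed

lemma ex_minimal:
  assumes "S \<subseteq> I" "S \<noteq> {}"
  shows "\<exists>v\<in>S. \<forall>s\<in>S. R s v \<longrightarrow> s = v"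
proof -
  obtain s0 where "s0 \<in> S" using assms(2) by blast
  then obtain v where v: "v \<in> S" and least: "\<And>s. s \<in> S \<Longrightarrow> card (subtree v) \<le> card (subtree s)"
    using ex_has_least_nat[of "\<lambda>s. s \<in> S" s0 "\<lambda>s. card (subtree s)"] by blast
  have "s = v" if s: "s \<in> S" "R s v" for s
  proof -
    have sv: "s \<in> I" "v \<in> I" using s v assms(1) by auto
    have "subtree s \<subseteq> subtree v"
      using sv s by (auto simp: subtree_def intro: R_trans[of _ s v])
    moreover have "card (subtree v) \<le> card (subtree s)" using least[OF s(1)] .
    ultimately have "subtree s = subtree v"
      using finite_subtree by (intro card_subset_eq) (auto intro: antisym card_mono)
    then have "R v s" using self_in_subtree[OF sv(2)] by (auto simp: subtree_def)
    then show ?thesis using R_antisym[of s v] sv s by blast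
  qed
  then show ?thesis using v by blast
qed

lemma card_min_labellings:
  assumes "S \<subseteq> I"
  shows "card (min_labellings S) * (\<Prod>v\<in>S. card (subtree v)) = fact (card I)"
proof -
  have "finite S" using assms finite_I by (rule finite_subset)
  then show ?thesis using assms
  proof (induction S rule: finite_remove_induct)
    case empty
    then show ?case by (simp add: min_labellings_def card_labellings finite_I)
  next
    case (remove S)
    obtain v where v: "v \<in> S" and minimal: "\<forall>s\<in>S. R s v \<longrightarrow> s = v"
      using ex_minimal[OF remove.prems remove.hyps(2)] by blast
    have "card (min_labellings (S - {v})) * (\<Prod>u\<in>S - {v}. card (subtree u)) = fact (card I)"
      using remove.IH[OF v] remove.prems by auto
    moreover have "(\<Prod>u\<in>S. card (subtree u)) = card (subtree v) * (\<Prod>u\<in>S - {v}. card (subtree u))"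
      using v remove.hyps by (simp add: prod.remove)
    ultimately show ?case
      using card_min_labellings_remove_minimal[OF remove.prems v minimal] by (simp add: ac_simps)
  qed
qed

lemma card_min_labellings_eq_fact_div:
  assumes "S \<subseteq> I"
  shows "(of_nat (card (min_labellings S)) :: 'b::field_char_0)
       = fact (card I) / (\<Prod>v\<in>S. of_nat (card (subtree v)))"
proof -
  have "finite S" using assms finite_I by (rule finite_subset)
  then have "(\<Prod>v\<in>S. of_nat (card (subtree v)) :: 'b) \<noteq> 0"
    using assms card_subtree_pos by auto
  moreover have "of_nat (card (min_labellings S)) * (\<Prod>v\<in>S. of_nat (card (subtree v)))
      = (fact (card I) :: 'b)"
    using arg_cong[OF card_min_labellings[OF assms], of "of_nat :: nat \<Rightarrow> 'b"]
    by (simp add: of_nat_prod)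
  ultimately show ?thesis by (simp add: field_simps)
qed

lemma sum_labellings_prod_min_in_subtree:
  fixes c e :: "'a \<Rightarrow> 'b::field_char_0"
  shows "(\<Sum>lab\<in>labellings I. \<Prod>v\<in>I. c v + e v * of_bool (min_in_subtree lab v))
       = fact (card I) * (\<Prod>v\<in>I. c v + e v / of_nat (card (subtree v)))"
proof -
  let ?L = "labellings I"
  have finite_Pow: "X \<in> Pow I \<Longrightarrow> finite (I - X)" for X using finite_I by blast
  have "(\<Sum>lab\<in>?L. \<Prod>v\<in>I. c v + e v * of_bool (min_in_subtree lab v))
      = (\<Sum>lab\<in>?L. \<Sum>X\<in>Pow I. (\<Prod>v\<in>X. c v) * (\<Prod>v\<in>I - X. e v * of_bool (min_in_subtree lab v)))"
    by (simp add: prod_add[OF finite_I])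
  also have "\<dots> = (\<Sum>lab\<in>?L. \<Sum>X\<in>Pow I.
      (\<Prod>v\<in>X. c v) * (\<Prod>v\<in>I - X. e v) * of_bool (lab \<in> min_labellings (I - X)))"
    by (intro sum.cong refl)
      (simp add: prod.distrib prod_of_bool finite_Pow min_labellings_def mult.assoc)
  also have "\<dots> = (\<Sum>X\<in>Pow I. \<Sum>lab\<in>?L.
      (\<Prod>v\<in>X. c v) * (\<Prod>v\<in>I - X. e v) * of_bool (lab \<in> min_labellings (I - X)))"
    by (rule sum.swap)
  also have "\<dots> = (\<Sum>X\<in>Pow I. (\<Prod>v\<in>X. c v) * (\<Prod>v\<in>I - X. e v) * of_nat (card (min_labellings (I - X))))"
  proof (intro sum.cong refl)
    fix X
    have "?L \<inter> {lab. lab \<in> min_labellings (I - X)} = min_labellings (I - X)"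
      by (auto simp: min_labellings_def)
    then show "(\<Sum>lab\<in>?L. (\<Prod>v\<in>X. c v) * (\<Prod>v\<in>I - X. e v) * of_bool (lab \<in> min_labellings (I - X)))
        = (\<Prod>v\<in>X. c v) * (\<Prod>v\<in>I - X. e v) * of_nat (card (min_labellings (I - X)))"
      by (simp add: finite_labellings[OF finite_I] flip: sum_distrib_left)
  qed
  also have "\<dots> = (\<Sum>X\<in>Pow I.
      fact (card I) * ((\<Prod>v\<in>X. c v) * (\<Prod>v\<in>I - X. e v / of_nat (card (subtree v)))))"
    by (intro sum.cong refl) (simp add: card_min_labellings_eq_fact_div prod_dividef)
  also have "\<dots> = fact (card I) * (\<Prod>v\<in>I. c v + e v / of_nat (card (subtree v)))"
    by (simp add: prod_add[OF finite_I] sum_distrib_left)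
  finally show ?thesis .
qed

end

fun tsize :: "ptree \<Rightarrow> nat" where
  "tsize (Node ts) = Suc (\<Sum>t\<leftarrow>ts. tsize t)"

definition paths :: "ptree \<Rightarrow> nat list set" where
  "paths t = {p. tget t p \<noteq> None}"

lemma paths_Node: "paths (Node ts) = insert [] (\<Union>i<length ts. (#) i ` paths (ts ! i))"
proof (rule set_eqI)
  fix p show "p \<in> paths (Node ts) \<longleftrightarrow> p \<in> insert [] (\<Union>i<length ts. (#) i ` paths (ts ! i))"
    by (cases p) (auto simp: paths_def)
qed

lemma finite_paths: "finite (paths t)"
  by (induction t) (auto simp: paths_Node)

lemma card_paths: "card (paths t) = tsize t"
proof (induction t)
  case (Node ts)
  have "card (\<Union>i<length ts. (#) i ` paths (ts ! i)) = (\<Sum>i<length ts. card ((#) i ` paths (ts ! i)))"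
    by (rule card_UN_disjoint) (auto simp: finite_paths)
  also have "\<dots> = (\<Sum>i<length ts. tsize (ts ! i))"
    using Node.IH by (intro sum.cong refl) (simp add: card_image)
  also have "\<dots> = (\<Sum>t\<leftarrow>ts. tsize t)"
    by (simp add: sum_list_sum_nth atLeast0LessThan)
  moreover have "finite (\<Union>i<length ts. (#) i ` paths (ts ! i))"
    and "[] \<notin> (\<Union>i<length ts. (#) i ` paths (ts ! i))"
    by (auto simp: finite_paths)
  ultimately show ?case by (simp add: paths_Node)
qed

lemma verts_eq_paths: "verts F = paths (Node F) - {[]}"
  by (auto simp: verts_def paths_def)

lemma finite_verts: "finite (verts F)"
  by (simp add: verts_eq_paths finite_paths)

lemma card_verts: "card (verts F) = (\<Sum>t\<leftarrow>F. tsize t)"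
proof -
  have "[] \<in> paths (Node F)" by (simp add: paths_def)
  then show ?thesis by (simp add: verts_eq_paths finite_paths card_paths)
qed

lemma tsize_pos: "0 < tsize t"
  by (cases t) simp

lemma length_le_sum_tsize: "length ts \<le> (\<Sum>t\<leftarrow>ts. tsize t)"
proof (induction ts)
  case (Cons t ts)
  then show ?case using tsize_pos[of t] by simp
qed simp

lemma forests_size_le_subset:
  "{ts. (\<Sum>t\<leftarrow>ts. tsize t) \<le> N} \<subseteq> {ts. set ts \<subseteq> {t. tsize t \<le> N} \<and> length ts \<le> N}"
proof clarify
  fix ts assume le: "(\<Sum>t\<leftarrow>ts. tsize t) \<le> N"
  have "tsize t \<le> N" if "t \<in> set ts" for t
    using member_le_sum_list[of "tsize t" "map tsize ts"] that le by simp
  then show "set ts \<subseteq> {t. tsize t \<le> N} \<and> length ts \<le> N"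
    using length_le_sum_tsize[of ts] le by auto
qed

lemma finite_trees_size_le: "finite {t. tsize t \<le> N}"
proof (induction N)
  case 0
  have "{t. tsize t \<le> 0} = {}" using tsize_pos by auto
  then show ?case by (simp only: finite.emptyI)
next
  case (Suc N)
  have "{t. tsize t \<le> Suc N} \<subseteq> Node ` {ts. (\<Sum>t\<leftarrow>ts. tsize t) \<le> N}"
  proof
    fix t assume "t \<in> {t. tsize t \<le> Suc N}"
    then show "t \<in> Node ` {ts. (\<Sum>t\<leftarrow>ts. tsize t) \<le> N}" by (cases t) auto
  qed
  also have "\<dots> \<subseteq> Node ` {ts. set ts \<subseteq> {t. tsize t \<le> N} \<and> length ts \<le> N}"
    using forests_size_le_subset by (rule image_mono)
  finally show ?case
    by (rule finite_subset) (intro finite_imageI finite_lists_length_le Suc.IH)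
qed

lemma finite_forests_size_le: "finite {ts. (\<Sum>t\<leftarrow>ts. tsize t) \<le> N}"
  using forests_size_le_subset
  by (rule finite_subset) (intro finite_lists_length_le finite_trees_size_le)

lemma card_verts_deg:
  assumes type: "has_type F r" and finite_support: "finite {d. r d \<noteq> 0}"
  shows "card {v \<in> verts F. P (deg F v)} = (\<Sum>d | P d \<and> r d \<noteq> 0. r d)"
proof -
  have "r (deg F v) \<noteq> 0" if "v \<in> verts F" for v
  proof -
    have "card {w \<in> verts F. deg F w = deg F v} \<noteq> 0"
      using that finite_verts by (subst card_0_eq) auto
    then show ?thesis using type by (simp add: has_type_def)
  qed
  then have "{v \<in> verts F. P (deg F v)} = (\<Union>d\<in>{d. P d \<and> r d \<noteq> 0}. {v \<in> verts F. deg F v = d})"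
    by auto
  moreover have "finite {d. P d \<and> r d \<noteq> 0}"
    using finite_support by (rule rev_finite_subset) auto
  ultimately have "card {v \<in> verts F. P (deg F v)}
      = (\<Sum>d | P d \<and> r d \<noteq> 0. card {v \<in> verts F. deg F v = d})"
    by (simp only:) (rule card_UN_disjoint, auto simp: finite_verts)
  then show ?thesis using type by (simp add: has_type_def)
qed

lemma card_internal:
  "has_type F r \<Longrightarrow> finite {d. r d \<noteq> 0} \<Longrightarrow> card (internal F) = num_internal r"
  using card_verts_deg[of F r "\<lambda>d. 1 \<le> d"] by (simp add: internal_def num_internal_def)

lemma finite_forests:
  assumes "finite {d. r d \<noteq> 0}"
  shows "finite (forests r)"
proof -
  have "forests r \<subseteq> {F. (\<Sum>t\<leftarrow>F. tsize t) \<le> (\<Sum>d | r d \<noteq> 0. r d)}"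
    using card_verts_deg[of _ r "\<lambda>_. True", OF _ assms] by (auto simp: forests_def card_verts)
  then show ?thesis by (rule finite_subset) (rule finite_forests_size_le)
qed

lemma forest_order_desc: "forest_order (internal F) desc"
proof
  show "finite (internal F)" using finite_verts by (simp add: internal_def)
next
  fix x v w assume "desc x v" "desc x w"
  then obtain a b where "v @ a = w @ b" by (auto simp: desc_def)
  then show "desc v w \<or> desc w v" by (auto simp: desc_def append_eq_append_conv2)
qed (auto simp: desc_def)

lemma allowed_eq:
  "allowed k F lab v = C ` {1..deg F v} \<union> (if proper F lab v then {} else C' ` {1..k})"
  by (auto simp: allowed_def)

lemma finite_allowed: "finite (allowed k F lab v)"
  by (simp add: allowed_eq)

lemma card_allowed: "card (allowed k F lab v) = deg F v + (if proper F lab v then 0 else k)"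
proof -
  have "card (C ` {1..deg F v}) = deg F v" "card (C' ` {1..k}) = k"
    by (simp_all add: card_image inj_on_def)
  moreover have "C ` {1..deg F v} \<inter> C' ` {1..k} = {}" by auto
  ultimately show ?thesis by (simp add: allowed_eq card_Un_disjoint)
qed

definition coloured_labellings ::
    "nat \<Rightarrow> ptree list \<Rightarrow> ((nat list \<Rightarrow> nat) \<times> (nat list \<Rightarrow> color)) set" where
  "coloured_labellings k F =
     (SIGMA lab:labellings (internal F). \<Pi>\<^sub>E v\<in>internal F. allowed k F lab v)"

lemma CF_eq_Sigma:
  assumes "finite {d. r d \<noteq> 0}"
  shows "CF r k = (SIGMA F:forests r. coloured_labellings k F)"
  using card_internal[OF _ assms]
  by (auto simp: CF_def coloured_labellings_def labellings_def forests_def)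

lemma finite_coloured_labellings: "finite (coloured_labellings k F)"
  using forest_order.finite_I[OF forest_order_desc]
  by (auto simp: coloured_labellings_def finite_labellings finite_allowed intro!: finite_PiE)

lemma card_coloured_labellings:
  "real (card (coloured_labellings k F))
   = fact (card (internal F)) * (\<Prod>v\<in>internal F. real (deg F v + k) - real k / real (hook F v))"
proof -
  interpret forest_order "internal F" desc by (rule forest_order_desc)
  have proper_iff: "proper F lab v \<longleftrightarrow> min_in_subtree lab v" for lab v
    by (auto simp: proper_def min_in_subtree_def subtree_def)
  have "card (coloured_labellings k F)
      = (\<Sum>lab\<in>labellings (internal F). \<Prod>v\<in>internal F. card (allowed k F lab v))"
    by (simp add: coloured_labellings_def card_SigmaI finite_labellings finite_I finite_PiE
        finite_allowed card_PiE)
  then have "real (card (coloured_labellings k F))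
      = (\<Sum>lab\<in>labellings (internal F). \<Prod>v\<in>internal F. real (card (allowed k F lab v)))"
    by simp
  also have "\<dots> = (\<Sum>lab\<in>labellings (internal F). \<Prod>v\<in>internal F.
           real (deg F v + k) + - real k * of_bool (min_in_subtree lab v))"
    by (intro sum.cong prod.cong refl) (simp add: card_allowed proper_iff)
  also have "\<dots> = fact (card (internal F)) *
      (\<Prod>v\<in>internal F. real (deg F v + k) + - real k / real (card (subtree v)))"
    by (rule sum_labellings_prod_min_in_subtree)
  also have "\<dots> = fact (card (internal F)) *
      (\<Prod>v\<in>internal F. real (deg F v + k) - real k / real (hook F v))"
    by (simp add: hook_def subtree_def)
  finally show ?thesis .
qed

theorem lemma3p1:
  fixes r :: "nat \<Rightarrow> nat" and k :: nat
  assumes "finite {d. r d \<noteq> 0}"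
  shows "real (card (CF r k)) =
    (\<Sum>F \<in> forests r. fact (num_internal r) *
        (\<Prod>v \<in> internal F. (real (deg F v + k) - real k / real (hook F v))))"
proof -
  have "card (CF r k) = (\<Sum>F\<in>forests r. card (coloured_labellings k F))"
    using finite_forests[OF assms] finite_coloured_labellings
    by (simp add: CF_eq_Sigma[OF assms] card_SigmaI)
  then show ?thesis
    using card_internal[OF _ assms] by (simp add: card_coloured_labellings forests_def)
qed

end
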